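(* For the CLT model, with negative seed set $N_0$ fixed, the negative influence reduction $\sigma_{NIR}(S)$, as a function of the positive seed set $S\subseteq V\setminus N_0$, is monotone and submodular; moreover $\sigma_{NIR}(\emptyset)=0$.
   Context: Weights: $G=(V,E)$ finite directed graph, each edge $(u,v)$ has weights $w^+_{uv},w^-_{uv}\ge 0$, with $w^\pm_{uv}=0$ for non-edges and $\sum_u w^+_{uv}\le1$, $\sum_u w^-_{uv}\le 1$ for all $v$. CLT process (two independent LT diffusions with negative dominance). Given disjoint seed sets $P_0$ (positive) and $N_0$ (negative), each node $v$ draws $\theta^+_v,\theta^-_v$ independently and uniformly from $[0,1]$. The positive diffusion is the LT process $R^+_0=P_0$, $R^+_t=R^+_{t-1}\cup\{v:\sum_{u\in R^+_{t-1}}w^+_{uv}\ge\theta^+_v\}$, and $\tau^+(v)=\min\{t: v\in R^+_t\}$ ($=\infty$ if no such $t$). The negative diffusion is defined identically from $N_0$, $w^-$, $\theta^-$, giving $\tau^-(v)$. A node $v$ is finally -active iff $\tau^-(v)<\infty$ and $\tau^-(v)\le\tau^+(v)$, and finally +active iff $\tau^+(v)<\infty$ and $\tau^+(v)<\tau^-(v)$. Influence blocking: for fixed thresholds, $IBS(S)$ is the set of nodes that are finally -active with seeds $(\emptyset,N_0)$ but not finally -active with seeds $(S,N_0)$; $\sigma_{NIR}(S)=\mathbb{E}_{\vec\theta^+,\vec\theta^-}|IBS(S)|$. A set function $f$ is monotone if $f(S)\le f(T)$ for $S\subseteq T$, and submodular if $f(S\cup\{x\})-f(S)\ge f(T\cup\{x\})-f(T)$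 for all $S\subseteq T$ and $x\notin T$ (here all sets are subsets of $V\setminus N_0$). *)

theory Defs
  imports "HOL-Probability.Probability"
begin

fun lt_reach :: "'v set \<Rightarrow> ('v \<Rightarrow> 'v \<Rightarrow> real) \<Rightarrow> ('v \<Rightarrow> real) \<Rightarrow> 'v set \<Rightarrow> nat \<Rightarrow> 'v set" where
  "lt_reach V w th A 0 = A"
| "lt_reach V w th A (Suc t) =
     lt_reach V w th A t \<union> {v \<in> V. (\<Sum>u\<in>lt_reach V w th A t. w u v) \<ge> th v}"

definition lt_time :: "'v set \<Rightarrow> ('v \<Rightarrow> 'v \<Rightarrow> real) \<Rightarrow> ('v \<Rightarrow> real) \<Rightarrow> 'v set \<Rightarrow> 'v \<Rightarrow> enat" where
  "lt_time V w th A v =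
     (if \<exists>t. v \<in> lt_reach V w th A t then enat (LEAST t. v \<in> lt_reach V w th A t) else \<infinity>)"

definition clt_neg_active ::
  "'v set \<Rightarrow> ('v \<Rightarrow> 'v \<Rightarrow> real) \<Rightarrow> ('v \<Rightarrow> 'v \<Rightarrow> real) \<Rightarrow> ('v \<Rightarrow> real) \<Rightarrow> ('v \<Rightarrow> real)
   \<Rightarrow> 'v set \<Rightarrow> 'v set \<Rightarrow> 'v \<Rightarrow> bool" where
  "clt_neg_active V wp wn thp thn P0 N0 v \<longleftrightarrow>
     lt_time V wn thn N0 v < \<infinity> \<and> lt_time V wn thn N0 v \<le> lt_time V wp thp P0 v"

definition IBS ::
  "'v set \<Rightarrow> ('v \<Rightarrow> 'v \<Rightarrow> real) \<Rightarrow> ('v \<Rightarrow> 'v \<Rightarrow> real) \<Rightarrow> 'v set \<Rightarrow> ('v \<Rightarrow> real) \<Rightarrow> ('v \<Rightarrow> real)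
   \<Rightarrow> 'v set \<Rightarrow> 'v set" where
  "IBS V wp wn N0 thp thn S =
     {v \<in> V. clt_neg_active V wp wn thp thn {} N0 v \<and> \<not> clt_neg_active V wp wn thp thn S N0 v}"

definition threshold_space :: "'v set \<Rightarrow> ('v \<Rightarrow> real) measure" where
  "threshold_space V = PiM V (\<lambda>_. uniform_measure lborel {0..1::real})"

definition sigma_NIR ::
  "'v set \<Rightarrow> ('v \<Rightarrow> 'v \<Rightarrow> real) \<Rightarrow> ('v \<Rightarrow> 'v \<Rightarrow> real) \<Rightarrow> 'v set \<Rightarrow> 'v set \<Rightarrow> real" where
  "sigma_NIR V wp wn N0 S =
     (\<integral>\<theta>. real (card (IBS V wp wn N0 (fst \<theta>) (snd \<theta>) S))
        \<partial>(threshold_space V \<Otimes>\<^sub>M threshold_space V))"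

end

theory Submission
  imports Defs
begin

(* Fix the negative thresholds.  Then v lies in IBS(S) exactly when the negative
   diffusion reaches v in some round n+1 and the positive diffusion from S, but not from the
   empty set, has reached v by round n (IBS_iff).  Hence, integrating out the positive
   thresholds, E|IBS(S)| is a sum over v of differences of probabilities P(v active after
   round n from seeds S) (expected_card_IBS, sigma_NIR_as_integral via Fubini).
   For LT with independent uniform thresholds this probability has an explicit recursive
   formula act_prob (lt_reach_probability): conditioning on the incoming weight, which does
   not depend on the threshold of v once the out-edges of v are removed, gives
   P(v active) = \<Sum>u w(u,v) P(u active in the graph without v's out-edges).
   From this recursion act_prob is monotone and submodular in the seed set by induction on
   the round (act_prob_mono, act_prob_submodular), and both properties survive the finite
   sum and the integral over the negative thresholds.  sigma_NIR({}) = 0 because IBS({})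
   is empty. *)

section \<open>Combinatorics of a single LT diffusion\<close>

lemma lt_reach_mono_round: "t \<le> t' \<Longrightarrow> lt_reach V w th A t \<subseteq> lt_reach V w th A t'"
  by (induction t' rule: dec_induct) auto

lemma lt_reach_subset: "lt_reach V w th A t \<subseteq> A \<union> V"
  by (induction t) auto

lemma finite_lt_reach: "finite (A \<union> V) \<Longrightarrow> finite (lt_reach V w th A t)"
  using lt_reach_subset finite_subset by metis

lemma lt_reach_mono_seeds:
  assumes "A \<subseteq> B" "finite (B \<union> V)" "\<And>a b. w a b \<ge> 0"
  shows "lt_reach V w th A t \<subseteq> lt_reach V w th B t"
proof (induction t)
  case 0
  then show ?case using assms by simp
next
  case (Suc t)
  have "(\<Sum>u\<in>lt_reach V w th A t. w u x) \<le> (\<Sum>u\<in>lt_reach V w th B t. w u x)" for x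
    by (rule sum_mono2) (use Suc finite_lt_reach[OF assms(2)] assms(3) in auto)
  then show ?case
    using Suc by (auto intro: order_trans)
qed

abbreviation drop_out_edges :: "'v \<Rightarrow> ('v \<Rightarrow> 'v \<Rightarrow> real) \<Rightarrow> ('v \<Rightarrow> 'v \<Rightarrow> real)" where
  "drop_out_edges v w \<equiv> (\<lambda>a b. if a = v then 0 else w a b)"

lemma drop_out_edges_col_sum:
  assumes "\<And>a b. w a b \<ge> 0" "\<And>v. v \<in> V \<Longrightarrow> (\<Sum>u\<in>V. w u v) \<le> 1" "v' \<in> V"
  shows "(\<Sum>u\<in>V. drop_out_edges v w u v') \<le> 1"
proof -
  have "(\<Sum>u\<in>V. drop_out_edges v w u v') \<le> (\<Sum>u\<in>V. w u v')"
    by (intro sum_mono) (use assms in auto)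
  then show ?thesis using assms(2)[OF assms(3)] by linarith
qed

lemma lt_reach_drop_out_edges:
  "v \<in> lt_reach V w th A t \<longleftrightarrow> v \<in> lt_reach V (drop_out_edges v w) th A t"
proof -
  have "v \<notin> lt_reach V w th A t \<or> v \<notin> lt_reach V (drop_out_edges v w) th A t \<longrightarrow>
        lt_reach V w th A t = lt_reach V (drop_out_edges v w) th A t" for t
  proof (induction t)
    case 0
    then show ?case by simp
  next
    case (Suc t)
    show ?case
    proof
      assume "v \<notin> lt_reach V w th A (Suc t) \<or> v \<notin> lt_reach V (drop_out_edges v w) th A (Suc t)"
      then have eq: "lt_reach V w th A t = lt_reach V (drop_out_edges v w) th A t"
        and v: "v \<notin> lt_reach V w th A t"
        using Suc by auto
      have "(\<Sum>u\<in>lt_reach V w th A t. w u x)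
          = (\<Sum>u\<in>lt_reach V (drop_out_edges v w) th A t. drop_out_edges v w u x)" for x
        unfolding eq[symmetric] by (rule sum.cong) (use v in auto)
      then show "lt_reach V w th A (Suc t) = lt_reach V (drop_out_edges v w) th A (Suc t)"
        using eq by simp
    qed
  qed
  then show ?thesis by blast
qed

lemma lt_reach_Suc_iff:
  assumes "finite (A \<union> V)" "\<And>a b. w a b \<ge> 0" "v \<notin> A"
  shows "v \<in> lt_reach V w th A (Suc k) \<longleftrightarrow> v \<in> V \<and> th v \<le> (\<Sum>u\<in>lt_reach V w th A k. w u v)"
proof -
  have incoming_mono: "(\<Sum>u\<in>lt_reach V w th A k. w u v) \<le> (\<Sum>u\<in>lt_reach V w th A (Suc k). w u v)" for k
    by (rule sum_mono2[OF finite_lt_reach[OF assms(1)]]) (use assms(2) in auto)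
  have "v \<in> lt_reach V w th A k \<Longrightarrow> v \<in> V \<and> th v \<le> (\<Sum>u\<in>lt_reach V w th A k. w u v)" for k
  proof (induction k)
    case 0
    then show ?case using assms by simp
  next
    case (Suc k)
    then show ?case
      using incoming_mono[of k] by (cases "v \<in> lt_reach V w th A k") fastforce+
  qed
  from this[of k] show ?thesis by auto
qed

lemma lt_reach_threshold_irrelevant:
  assumes "\<And>b. w v b = 0"
  shows "lt_reach V w (th(v := y)) A k - {v} = lt_reach V w th A k - {v}"
proof (induction k)
  case 0
  then show ?case by simp
next
  case (Suc k)
  have remove_v: "sum (\<lambda>u. w u x) B = sum (\<lambda>u. w u x) (B - {v})" for B x
    using assms by (cases "finite B"; cases "v \<in> B") (auto simp: sum.remove)
  have incoming_eq:
    "(\<Sum>u\<in>lt_reach V w (th(v := y)) A k. w u x) = (\<Sum>u\<in>lt_reach V w th A k. w u x)" for x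
    by (subst (1 2) remove_v) (simp only: Suc)
  show ?case
  proof (rule set_eqI)
    fix x
    have "x \<noteq> v \<Longrightarrow> x \<in> lt_reach V w (th(v := y)) A k \<longleftrightarrow> x \<in> lt_reach V w th A k"
      using Suc by blast
    then show "x \<in> lt_reach V w (th(v := y)) A (Suc k) - {v} \<longleftrightarrow> x \<in> lt_reach V w th A (Suc k) - {v}"
      by (cases "x = v") (auto simp: incoming_eq)
  qed
qed

section \<open>The activation probability\<close>

(* act_prob V w v k A is the probability (over independent uniform thresholds) that v is
   active after round k of the LT diffusion from seeds A; this is proved in
   lt_reach_probability below.  The recursion conditions on the in-neighbours of v,
   working in the graph without the out-edges of v. *)
fun act_prob :: "'v set \<Rightarrow> ('v \<Rightarrow> 'v \<Rightarrow> real) \<Rightarrow> 'v \<Rightarrow> nat \<Rightarrow> 'v set \<Rightarrow> real" where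
  "act_prob V w v 0 A = (if v \<in> A then 1 else 0)"
| "act_prob V w v (Suc k) A = (if v \<in> A then 1 else if v \<in> V then
      (\<Sum>u\<in>V. drop_out_edges v w u v * act_prob V (drop_out_edges v w) u k A) else 0)"

lemma act_prob_le_1:
  assumes "\<And>a b. w a b \<ge> 0" "\<And>v. v \<in> V \<Longrightarrow> (\<Sum>u\<in>V. w u v) \<le> 1"
  shows "act_prob V w v k A \<le> 1"
  using assms
proof (induction k arbitrary: w v)
  case 0
  then show ?case by auto
next
  case (Suc k)
  have "(\<Sum>u\<in>V. drop_out_edges v w u v * act_prob V (drop_out_edges v w) u k A)
      \<le> (\<Sum>u\<in>V. drop_out_edges v w u v * 1)"
    by (intro sum_mono mult_left_mono Suc.IH drop_out_edges_col_sum) (use Suc.prems in auto)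
  also have "\<dots> \<le> (\<Sum>u\<in>V. w u v)"
    by (intro sum_mono) (use Suc.prems in auto)
  finally show ?case
    using Suc.prems(2)[of v] by auto
qed

lemma act_prob_mono:
  assumes "\<And>a b. w a b \<ge> 0" "\<And>v. v \<in> V \<Longrightarrow> (\<Sum>u\<in>V. w u v) \<le> 1" "A \<subseteq> B"
  shows "act_prob V w v k A \<le> act_prob V w v k B"
  using assms
proof (induction k arbitrary: w v)
  case 0
  then show ?case by auto
next
  case (Suc k)
  have "(\<Sum>u\<in>V. drop_out_edges v w u v * act_prob V (drop_out_edges v w) u k A)
      \<le> (\<Sum>u\<in>V. drop_out_edges v w u v * act_prob V (drop_out_edges v w) u k B)"
    by (intro sum_mono mult_left_mono Suc.IH drop_out_edges_col_sum) (use Suc.prems in auto)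
  moreover have "act_prob V w v (Suc k) A \<le> 1"
    by (rule act_prob_le_1) (use Suc.prems in auto)
  ultimately show ?case
    using Suc.prems by (auto split: if_splits)
qed

lemma act_prob_submodular:
  assumes "\<And>a b. w a b \<ge> 0" "\<And>v. v \<in> V \<Longrightarrow> (\<Sum>u\<in>V. w u v) \<le> 1" "A \<subseteq> B" "x \<notin> B"
  shows "act_prob V w v k (insert x A) - act_prob V w v k A
       \<ge> act_prob V w v k (insert x B) - act_prob V w v k B"
  using assms(1,2)
proof (induction k arbitrary: w v)
  case 0
  then show ?case using assms by auto
next
  case (Suc k)
  consider "v \<in> A" | "v \<in> B - A" | "v = x" | "v \<notin> insert x B" "v \<in> V" | "v \<notin> insert x B" "v \<notin> V"
    by auto
  then show ?case
  proof cases
    case 1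
    then show ?thesis using assms by auto
  next
    case 2
    have "act_prob V w v (Suc k) A \<le> act_prob V w v (Suc k) (insert x A)"
      by (rule act_prob_mono) (use Suc.prems in auto)
    then show ?thesis using 2 by auto
  next
    case 3
    have "act_prob V w v (Suc k) A \<le> act_prob V w v (Suc k) B"
      by (rule act_prob_mono) (use Suc.prems assms in auto)
    then show ?thesis using 3 assms by auto
  next
    case 4
    let ?w = "drop_out_edges v w"
    have "(\<Sum>u\<in>V. ?w u v * act_prob V ?w u k (insert x B)) - (\<Sum>u\<in>V. ?w u v * act_prob V ?w u k B)
       \<le> (\<Sum>u\<in>V. ?w u v * act_prob V ?w u k (insert x A)) - (\<Sum>u\<in>V. ?w u v * act_prob V ?w u k A)"
      unfolding sum_subtractf[symmetric] right_diff_distrib[symmetric]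
      by (intro sum_mono mult_left_mono Suc.IH drop_out_edges_col_sum) (use Suc.prems in auto)
    then show ?thesis using 4 assms by auto
  next
    case 5
    then show ?thesis using assms by auto
  qed
qed

section \<open>Probability over independent uniform thresholds\<close>

abbreviation unif01 :: "real measure" where
  "unif01 \<equiv> uniform_measure lborel {0..1::real}"

lemma prob_space_unif01: "prob_space unif01"
  by (rule prob_space_uniform_measure) auto

lemma prob_space_threshold_space: "prob_space (threshold_space V)"
  unfolding threshold_space_def by (rule prob_space_PiM) (rule prob_space_unif01)

lemma threshold_component_measurable:
  "u \<in> V \<Longrightarrow> (\<lambda>th. th u) \<in> borel_measurable (threshold_space V)"
  unfolding threshold_space_def
  using measurable_component_singleton[of u V "\<lambda>_. unif01"]
  by (simp add: measurable_cong_sets[OF refl sets_uniform_measure[symmetric]] sets_lborel)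

lemma integrable_threshold_bounded:
  assumes "f \<in> borel_measurable (threshold_space V)" "\<And>th. \<bar>f th\<bar> \<le> B"
  shows "integrable (threshold_space V) (f :: _ \<Rightarrow> real)"
proof -
  interpret prob_space "threshold_space V" by (rule prob_space_threshold_space)
  show ?thesis by (rule integrable_const_bound[where B = B]) (use assms in auto)
qed

(* Whether u is active after round k is an event: the incoming weight is a finite sum of
   measurable indicators, compared with the measurable coordinate th u. *)
lemma lt_reach_measurable:
  assumes "finite (A \<union> V)"
  shows "Measurable.pred (threshold_space V) (\<lambda>th. u \<in> lt_reach V w th A k)"
proof (induction k arbitrary: u)
  case 0
  then show ?case by simp
next
  case (Suc k)
  have incoming_eq: "(\<Sum>a\<in>lt_reach V w th A k. w a u)
      = (\<Sum>a\<in>A \<union> V. if a \<in> lt_reach V w th A k then w a u else 0)" for th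
    using sum.inter_restrict[OF assms, of "\<lambda>a. w a u" "lt_reach V w th A k"] lt_reach_subset[of V w th A k]
    by (simp add: Int_absorb1)
  have "(\<lambda>th. \<Sum>a\<in>A \<union> V. if a \<in> lt_reach V w th A k then w a u else 0)
      \<in> borel_measurable (threshold_space V)"
    by (intro borel_measurable_sum measurable_If) (auto intro: predE Suc.IH)
  then have "u \<in> V \<Longrightarrow> Measurable.pred (threshold_space V)
      (\<lambda>th. th u \<le> (\<Sum>a\<in>A \<union> V. if a \<in> lt_reach V w th A k then w a u else 0))"
    unfolding pred_def by (intro borel_measurable_le threshold_component_measurable)
  then show ?case
    using Suc.IH by (cases "u \<in> V") (simp_all add: incoming_eq)
qed

lemma lt_reach_indicator_measurable:
  assumes "finite V" "A \<subseteq> V"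
  shows "(\<lambda>th. if a \<in> lt_reach V w th A k then (c::real) else 0) \<in> borel_measurable (threshold_space V)"
proof -
  have "finite (A \<union> V)" using assms finite_subset by auto
  then show ?thesis by (intro measurable_If predE lt_reach_measurable) auto
qed

lemma integral_unif01_below:
  assumes "0 \<le> c" "c \<le> (1::real)"
  shows "(\<integral>y. (if y \<le> c then 1 else 0) \<partial>unif01) = c"
proof -
  have "(\<integral>y. (if y \<le> c then 1 else 0) \<partial>unif01) = (\<integral>y. indicator {..c} y \<partial>unif01)"
    by (rule Bochner_Integration.integral_cong) (auto simp: indicator_def)
  also have "\<dots> = measure unif01 {..c}" by simp
  also have "\<dots> = measure lborel ({0..1} \<inter> {..c}) / measure lborel {0..1::real}"
    by (subst measure_uniform_measure) auto
  also have "{0..1} \<inter> {..c} = {0..c}" using assms by auto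
  finally show ?thesis using assms by simp
qed

lemma threshold_integral_split:
  fixes f :: "_ \<Rightarrow> real"
  assumes "finite V" "u \<in> V" "integrable (threshold_space V) f"
  shows "integral\<^sup>L (threshold_space V) f
       = (\<integral>th. (\<integral>y. f (th(u := y)) \<partial>unif01) \<partial>PiM (V - {u}) (\<lambda>_. unif01))"
proof -
  interpret unif01: prob_space unif01 by (rule prob_space_unif01)
  interpret product_prob_space "\<lambda>_. unif01" V by unfold_locales
  have eq: "threshold_space V = PiM (insert u (V - {u})) (\<lambda>_. unif01)"
    using assms(2) by (simp add: threshold_space_def insert_absorb)
  show ?thesis unfolding eq
    using product_integral_insert[of "V - {u}" u f] assms eq by simp
qed

(* The key probabilistic step: if X \<in> [0,1] does not depend on the threshold of u, then
   P(th u \<le> X) = E X, since th u is uniform on [0,1] and independent of X. *)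
lemma integral_threshold_below:
  assumes "finite V" "u \<in> V" and X_meas: "X \<in> borel_measurable (threshold_space V)"
    and X_bounds: "\<And>th. 0 \<le> X th \<and> X th \<le> 1"
    and X_indep: "\<And>th y. X (th(u := y)) = X th"
  shows "(\<integral>th. (if th u \<le> X th then 1 else 0) \<partial>threshold_space V) = integral\<^sup>L (threshold_space V) X"
proof -
  have "(\<lambda>th. if th u \<le> X th then 1 else (0::real)) \<in> borel_measurable (threshold_space V)"
    by (rule measurable_If) (auto intro: borel_measurable_le threshold_component_measurable[OF assms(2)] X_meas)
  then have "integrable (threshold_space V) (\<lambda>th. if th u \<le> X th then 1 else (0::real))"
    by (rule integrable_threshold_bounded[where B = 1]) auto
  moreover have "integrable (threshold_space V) X"
    by (rule integrable_threshold_bounded[OF X_meas, where B = 1]) (use X_bounds in auto)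
  ultimately show ?thesis
    using threshold_integral_split[OF assms(1,2)]
    by (simp add: X_indep integral_unif01_below X_bounds)
qed

definition incoming_weight ::
  "'v set \<Rightarrow> ('v \<Rightarrow> 'v \<Rightarrow> real) \<Rightarrow> ('v \<Rightarrow> real) \<Rightarrow> 'v set \<Rightarrow> nat \<Rightarrow> 'v \<Rightarrow> real" where
  "incoming_weight V w th A k u =
     (\<Sum>a\<in>V. if a \<in> lt_reach V (drop_out_edges u w) th A k then drop_out_edges u w a u else 0)"

lemma lt_reach_Suc_iff_incoming_weight:
  assumes "finite V" "A \<subseteq> V" "\<And>a b. w a b \<ge> 0" "u \<notin> A" "u \<in> V"
  shows "u \<in> lt_reach V w th A (Suc k) \<longleftrightarrow> th u \<le> incoming_weight V w th A k u"
proof -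
  let ?w = "drop_out_edges u w"
  have fin: "finite (A \<union> V)" using assms(1,2) finite_subset by auto
  have "u \<in> lt_reach V w th A (Suc k) \<longleftrightarrow> u \<in> lt_reach V ?w th A (Suc k)"
    by (rule lt_reach_drop_out_edges)
  also have "\<dots> \<longleftrightarrow> u \<in> V \<and> th u \<le> (\<Sum>a\<in>lt_reach V ?w th A k. ?w a u)"
    by (rule lt_reach_Suc_iff[OF fin _ assms(4)]) (use assms(3) in auto)
  also have "(\<Sum>a\<in>lt_reach V ?w th A k. ?w a u) = incoming_weight V w th A k u"
    unfolding incoming_weight_def
    using sum.inter_restrict[OF assms(1), of "\<lambda>a. ?w a u" "lt_reach V ?w th A k"]
      lt_reach_subset[of V ?w th A k] assms(2)
    by (simp add: Int_absorb1 Un_absorb1)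
  finally show ?thesis using assms(5) by simp
qed

lemma incoming_weight_threshold_irrelevant:
  "incoming_weight V w (th(u := y)) A k u = incoming_weight V w th A k u"
  unfolding incoming_weight_def
proof (rule sum.cong[OF refl])
  fix a
  have "lt_reach V (drop_out_edges u w) (th(u := y)) A k - {u} = lt_reach V (drop_out_edges u w) th A k - {u}"
    by (rule lt_reach_threshold_irrelevant) simp
  then show "(if a \<in> lt_reach V (drop_out_edges u w) (th(u := y)) A k then drop_out_edges u w a u else 0)
      = (if a \<in> lt_reach V (drop_out_edges u w) th A k then drop_out_edges u w a u else 0)"
    by (cases "a = u") auto
qed

lemma lt_reach_probability:
  assumes "finite V" "A \<subseteq> V"
    and "\<And>a b. w a b \<ge> 0" "\<And>v. v \<in> V \<Longrightarrow> (\<Sum>u\<in>V. w u v) \<le> 1"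
  shows "(\<integral>th. (if u \<in> lt_reach V w th A k then 1 else 0) \<partial>threshold_space V) = act_prob V w u k A"
  using assms(3,4)
proof (induction k arbitrary: w u)
  interpret prob_space "threshold_space V" by (rule prob_space_threshold_space)
  case 0
  then show ?case by (simp add: prob_space)
next
  interpret prob_space "threshold_space V" by (rule prob_space_threshold_space)
  case (Suc k)
  consider "u \<in> A" | "u \<notin> A" "u \<notin> V" | "u \<notin> A" "u \<in> V" by auto
  then show ?case
  proof cases
    case 1
    then have "u \<in> lt_reach V w th A (Suc k)" for th
      using lt_reach_mono_round[of 0 "Suc k" V w th A] by auto
    then show ?thesis using 1 by (simp add: prob_space)
  next
    case 2
    then have "u \<notin> lt_reach V w th A (Suc k)" for th
      using lt_reach_subset[of V w th A "Suc k"] by auto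
    then show ?thesis using 2 by simp
  next
    case 3
    let ?w = "drop_out_edges u w"
    let ?X = "incoming_weight V w"
    have w_nonneg: "\<And>a b. ?w a b \<ge> 0"
      using Suc.prems by auto
    have w_col: "\<And>v. v \<in> V \<Longrightarrow> (\<Sum>a\<in>V. ?w a v) \<le> 1"
      by (rule drop_out_edges_col_sum) (use Suc.prems in auto)
    have X_bounds: "0 \<le> ?X th A k u \<and> ?X th A k u \<le> 1" for th
    proof -
      have "?X th A k u \<le> (\<Sum>a\<in>V. ?w a u)"
        unfolding incoming_weight_def by (rule sum_mono) (use Suc.prems in auto)
      then show ?thesis
        using w_col[OF 3(2)] w_nonneg
        unfolding incoming_weight_def by (auto intro: sum_nonneg)
    qed
    have summand_meas: "(\<lambda>th. if a \<in> lt_reach V ?w th A k then ?w a u else 0)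
        \<in> borel_measurable (threshold_space V)" for a
      by (rule lt_reach_indicator_measurable[OF assms(1,2)])
    have summand_integrable: "integrable (threshold_space V)
        (\<lambda>th. if a \<in> lt_reach V ?w th A k then ?w a u else 0)" for a
      by (rule integrable_threshold_bounded[OF summand_meas, where B = "\<bar>?w a u\<bar>"]) auto
    have "(\<integral>th. (if u \<in> lt_reach V w th A (Suc k) then 1 else 0) \<partial>threshold_space V)
        = (\<integral>th. (if th u \<le> ?X th A k u then 1 else 0) \<partial>threshold_space V)"
      by (simp only: lt_reach_Suc_iff_incoming_weight[OF assms(1,2) Suc.prems(1) 3])
    also have "\<dots> = (\<integral>th. ?X th A k u \<partial>threshold_space V)"
      by (rule integral_threshold_below[OF assms(1) 3(2) _ X_bounds incoming_weight_threshold_irrelevant])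
        (unfold incoming_weight_def, intro borel_measurable_sum summand_meas)
    also have "\<dots> = (\<Sum>a\<in>V. \<integral>th. (if a \<in> lt_reach V ?w th A k then ?w a u else 0) \<partial>threshold_space V)"
      unfolding incoming_weight_def
      by (rule Bochner_Integration.integral_sum[OF summand_integrable])
    also have "\<dots> = (\<Sum>a\<in>V. ?w a u * act_prob V ?w a k A)"
    proof (rule sum.cong[OF refl])
      fix a
      have "(\<integral>th. (if a \<in> lt_reach V ?w th A k then ?w a u else 0) \<partial>threshold_space V)
          = (\<integral>th. ?w a u * (if a \<in> lt_reach V ?w th A k then 1 else 0) \<partial>threshold_space V)"
        by (rule Bochner_Integration.integral_cong) auto
      also have "\<dots> = ?w a u * (\<integral>th. (if a \<in> lt_reach V ?w th A k then 1 else 0) \<partial>threshold_space V)"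
        by (rule integral_mult_right_zero)
      finally have "(\<integral>th. (if a \<in> lt_reach V ?w th A k then ?w a u else 0) \<partial>threshold_space V)
          = ?w a u * (\<integral>th. (if a \<in> lt_reach V ?w th A k then 1 else 0) \<partial>threshold_space V)" .
      then show "(\<integral>th. (if a \<in> lt_reach V ?w th A k then ?w a u else 0) \<partial>threshold_space V)
          = ?w a u * act_prob V ?w a k A"
        using Suc.IH[OF w_nonneg w_col] by simp
    qed
    also have "\<dots> = act_prob V w u (Suc k) A"
      using 3 by simp
    finally show ?thesis .
  qed
qed

section \<open>Activation times and the influence blocking set\<close>

lemma lt_time_le_iff: "lt_time V w th A v \<le> enat m \<longleftrightarrow> v \<in> lt_reach V w th A m"
proof (cases "\<exists>t. v \<in> lt_reach V w th A t")
  case True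
  let ?t = "LEAST t. v \<in> lt_reach V w th A t"
  have "v \<in> lt_reach V w th A ?t"
    using True by (rule LeastI_ex)
  then have "?t \<le> m \<longleftrightarrow> v \<in> lt_reach V w th A m"
    using lt_reach_mono_round[of ?t m V w th A] by (auto intro: Least_le)
  then show ?thesis
    using True unfolding lt_time_def by simp
next
  case False
  then show ?thesis unfolding lt_time_def by auto
qed

lemma lt_time_eq_Suc_iff: "lt_time V w th A v = enat (Suc n) \<longleftrightarrow>
    v \<in> lt_reach V w th A (Suc n) \<and> v \<notin> lt_reach V w th A n"
proof -
  have enat_eq: "x = enat (Suc n) \<longleftrightarrow> x \<le> enat (Suc n) \<and> \<not> x \<le> enat n" for x :: enat
    by (cases x) auto
  show ?thesis unfolding enat_eq lt_time_le_iff ..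
qed

lemma enat_blocking_iff:
  fixes x a b :: enat
  shows "x < \<infinity> \<and> x \<le> a \<and> \<not> (x < \<infinity> \<and> x \<le> b) \<longleftrightarrow>
     (\<exists>n. x = enat (Suc n) \<and> b \<le> enat n \<and> \<not> a \<le> enat n)"
proof (cases x)
  case (enat m)
  have lt_Suc: "(b::enat) < enat (Suc n) \<longleftrightarrow> b \<le> enat n" for b n
    by (cases b) auto
  have Suc_le: "enat (Suc n) \<le> (a::enat) \<longleftrightarrow> \<not> a \<le> enat n" for a n
    by (cases a) auto
  show ?thesis
  proof (cases m)
    case 0
    then show ?thesis using enat by (auto simp: enat_0_iff zero_enat_def[symmetric])
  next
    case (Suc n)
    then show ?thesis using enat lt_Suc[of b n] Suc_le[of n a] by (auto simp: not_le)
  qed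
qed simp

lemma IBS_iff:
  "v \<in> IBS V wp wn N0 thp thn S \<longleftrightarrow> v \<in> V \<and> (\<exists>n. lt_time V wn thn N0 v = enat (Suc n)
       \<and> v \<in> lt_reach V wp thp S n \<and> v \<notin> lt_reach V wp thp {} n)"
  unfolding IBS_def clt_neg_active_def mem_Collect_eq
  using enat_blocking_iff[of "lt_time V wn thn N0 v" "lt_time V wp thp {} v" "lt_time V wp thp S v"]
  unfolding lt_time_le_iff by blast

section \<open>The expected blocking as a sum of activation probabilities\<close>

definition neg_round :: "'v set \<Rightarrow> ('v \<Rightarrow> 'v \<Rightarrow> real) \<Rightarrow> ('v \<Rightarrow> real) \<Rightarrow> 'v set \<Rightarrow> 'v \<Rightarrow> nat" where
  "neg_round V wn thn N0 v = (SOME n. lt_time V wn thn N0 v = enat (Suc n))"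

(* For fixed negative thresholds, the probability (over the positive thresholds) that S blocks v. *)
definition blocking_prob ::
  "'v set \<Rightarrow> ('v \<Rightarrow> 'v \<Rightarrow> real) \<Rightarrow> ('v \<Rightarrow> 'v \<Rightarrow> real) \<Rightarrow> 'v set \<Rightarrow> ('v \<Rightarrow> real) \<Rightarrow> 'v set \<Rightarrow> 'v \<Rightarrow> real"
  where
  "blocking_prob V wp wn N0 thn S v = (if \<exists>n. lt_time V wn thn N0 v = enat (Suc n) then
      act_prob V wp v (neg_round V wn thn N0 v) S - act_prob V wp v (neg_round V wn thn N0 v) {} else 0)"

lemma card_as_indicator_sum:
  assumes "finite V" "X \<subseteq> V"
  shows "real (card X) = (\<Sum>v\<in>V. if v \<in> X then 1 else 0)"
  using sum.inter_restrict[OF assms(1), of "\<lambda>_. (1::real)" X] assms(2)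
  by (simp add: Int_absorb1)

lemma IBS_subset: "IBS V wp wn N0 thp thn S \<subseteq> V"
  unfolding IBS_def by auto

lemma expected_card_IBS:
  assumes finV: "finite V" and SV: "S \<subseteq> V" and nonneg: "\<And>a b. wp a b \<ge> 0"
    and col_sum: "\<And>v. v \<in> V \<Longrightarrow> (\<Sum>u\<in>V. wp u v) \<le> 1"
  shows "(\<integral>thp. real (card (IBS V wp wn N0 thp thn S)) \<partial>threshold_space V)
       = (\<Sum>v\<in>V. blocking_prob V wp wn N0 thn S v)"
proof -
  let ?n = "neg_round V wn thn N0"
  let ?ind = "\<lambda>A v thp. if v \<in> lt_reach V wp thp A (?n v) then 1 else (0::real)"
  define h where "h v thp = (if \<exists>n. lt_time V wn thn N0 v = enat (Suc n)
      then ?ind S v thp - ?ind {} v thp else 0)" for v thp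
  have IBS_indicator: "(if v \<in> IBS V wp wn N0 thp thn S then 1 else 0) = h v thp" if "v \<in> V" for v thp
  proof (cases "\<exists>n. lt_time V wn thn N0 v = enat (Suc n)")
    case True
    then have "lt_time V wn thn N0 v = enat (Suc (?n v))"
      unfolding neg_round_def by (rule someI_ex)
    moreover have "lt_reach V wp thp {} n \<subseteq> lt_reach V wp thp S n" for n
      by (rule lt_reach_mono_seeds) (use finV SV nonneg finite_subset in auto)
    ultimately show ?thesis
      unfolding h_def IBS_iff using that True by auto
  next
    case False
    then show ?thesis unfolding h_def IBS_iff by auto
  qed
  have ind_integrable: "A \<subseteq> V \<Longrightarrow> integrable (threshold_space V) (?ind A v)" for A v
    by (intro integrable_threshold_bounded[where B = 1] lt_reach_indicator_measurable finV) auto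
  have "(\<integral>thp. real (card (IBS V wp wn N0 thp thn S)) \<partial>threshold_space V)
      = (\<integral>thp. (\<Sum>v\<in>V. h v thp) \<partial>threshold_space V)"
    by (rule Bochner_Integration.integral_cong[OF refl])
      (simp add: card_as_indicator_sum[OF finV IBS_subset] IBS_indicator)
  also have "\<dots> = (\<Sum>v\<in>V. \<integral>thp. h v thp \<partial>threshold_space V)"
  proof (rule Bochner_Integration.integral_sum)
    show "integrable (threshold_space V) (h v)" for v
      by (cases "\<exists>n. lt_time V wn thn N0 v = enat (Suc n)")
        (auto simp: h_def[abs_def] intro!: Bochner_Integration.integrable_diff ind_integrable SV)
  qed
  also have "\<dots> = (\<Sum>v\<in>V. blocking_prob V wp wn N0 thn S v)"
  proof (rule sum.cong[OF refl])
    fix v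
    have "A \<subseteq> V \<Longrightarrow> (\<integral>thp. ?ind A v thp \<partial>threshold_space V) = act_prob V wp v (?n v) A" for A
      by (rule lt_reach_probability[OF finV _ nonneg col_sum])
    then show "(\<integral>thp. h v thp \<partial>threshold_space V) = blocking_prob V wp wn N0 thn S v"
      unfolding h_def blocking_prob_def using ind_integrable SV
      by (simp add: Bochner_Integration.integral_diff)
  qed
  finally show ?thesis .
qed

lemma sigma_NIR_as_integral:
  assumes finV: "finite V" and SV: "S \<subseteq> V" and N0V: "N0 \<subseteq> V"
    and nonneg: "\<And>a b. wp a b \<ge> 0" and col_sum: "\<And>v. v \<in> V \<Longrightarrow> (\<Sum>u\<in>V. wp u v) \<le> 1"
  shows "sigma_NIR V wp wn N0 S = (\<integral>thn. (\<Sum>v\<in>V. blocking_prob V wp wn N0 thn S v) \<partial>threshold_space V)"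
    and "integrable (threshold_space V) (\<lambda>thn. \<Sum>v\<in>V. blocking_prob V wp wn N0 thn S v)"
proof -
  let ?P = "threshold_space V"
  interpret P: prob_space ?P by (rule prob_space_threshold_space)
  interpret PP: pair_prob_space ?P ?P by unfold_locales
  define f where "f thp thn = real (card (IBS V wp wn N0 thp thn S))" for thp thn
  have fin: "finite (S \<union> V)" "finite ({} \<union> V)" "finite (N0 \<union> V)"
    using finV SV N0V finite_subset by auto
  have IBS_meas: "Measurable.pred (?P \<Otimes>\<^sub>M ?P) (\<lambda>\<theta>. v \<in> IBS V wp wn N0 (fst \<theta>) (snd \<theta>) S)" for v
  proof -
    have "Measurable.pred (?P \<Otimes>\<^sub>M ?P) (\<lambda>\<theta>. v \<in> lt_reach V wn (snd \<theta>) N0 m)"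
      and "Measurable.pred (?P \<Otimes>\<^sub>M ?P) (\<lambda>\<theta>. v \<in> lt_reach V wp (fst \<theta>) S m)"
      and "Measurable.pred (?P \<Otimes>\<^sub>M ?P) (\<lambda>\<theta>. v \<in> lt_reach V wp (fst \<theta>) {} m)" for m
      by (rule measurable_compose[OF measurable_snd lt_reach_measurable[OF fin(3)]]
               measurable_compose[OF measurable_fst lt_reach_measurable[OF fin(1)]]
               measurable_compose[OF measurable_fst lt_reach_measurable[OF fin(2)]])+
    then show ?thesis
      unfolding IBS_iff lt_time_eq_Suc_iff by measurable
  qed
  have "(\<lambda>\<theta>. f (fst \<theta>) (snd \<theta>)) \<in> borel_measurable (?P \<Otimes>\<^sub>M ?P)"
    unfolding f_def card_as_indicator_sum[OF finV IBS_subset]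
    by (intro borel_measurable_sum measurable_If predE IBS_meas) auto
  then have "integrable (?P \<Otimes>\<^sub>M ?P) (\<lambda>\<theta>. f (fst \<theta>) (snd \<theta>))"
    by (rule PP.integrable_const_bound[where B = "real (card V)", rotated])
      (auto simp: f_def intro: card_mono[OF finV IBS_subset])
  then have f_integrable: "integrable (?P \<Otimes>\<^sub>M ?P) (case_prod f)"
    by (simp add: case_prod_beta')
  have inner: "(\<integral>thp. f thp thn \<partial>?P) = (\<Sum>v\<in>V. blocking_prob V wp wn N0 thn S v)" for thn
    unfolding f_def by (rule expected_card_IBS[OF finV SV nonneg col_sum])
  have "sigma_NIR V wp wn N0 S = integral\<^sup>L (?P \<Otimes>\<^sub>M ?P) (case_prod f)"
    unfolding sigma_NIR_def f_def by (simp add: case_prod_beta')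
  also have "\<dots> = (\<integral>thn. (\<integral>thp. f thp thn \<partial>?P) \<partial>?P)"
    by (rule PP.integral_snd[OF f_integrable, symmetric])
  finally show "sigma_NIR V wp wn N0 S = (\<integral>thn. (\<Sum>v\<in>V. blocking_prob V wp wn N0 thn S v) \<partial>?P)"
    by (simp add: inner)
  show "integrable ?P (\<lambda>thn. \<Sum>v\<in>V. blocking_prob V wp wn N0 thn S v)"
    using PP.integrable_snd[OF f_integrable] by (simp add: inner)
qed

section \<open>Monotonicity and submodularity\<close>

lemma blocking_prob_mono:
  assumes "\<And>a b. wp a b \<ge> 0" "\<And>v. v \<in> V \<Longrightarrow> (\<Sum>u\<in>V. wp u v) \<le> 1" "S \<subseteq> T"
  shows "blocking_prob V wp wn N0 thn S v \<le> blocking_prob V wp wn N0 thn T v"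
  unfolding blocking_prob_def using act_prob_mono[OF assms] by auto

lemma blocking_prob_submodular:
  assumes "\<And>a b. wp a b \<ge> 0" "\<And>v. v \<in> V \<Longrightarrow> (\<Sum>u\<in>V. wp u v) \<le> 1" "S \<subseteq> T" "x \<notin> T"
  shows "blocking_prob V wp wn N0 thn (insert x S) v - blocking_prob V wp wn N0 thn S v
     \<ge> blocking_prob V wp wn N0 thn (insert x T) v - blocking_prob V wp wn N0 thn T v"
  unfolding blocking_prob_def using act_prob_submodular[OF assms] by auto

lemma sigma_NIR_mono:
  assumes "finite V" "N0 \<subseteq> V" "\<And>a b. wp a b \<ge> 0" "\<And>v. v \<in> V \<Longrightarrow> (\<Sum>u\<in>V. wp u v) \<le> 1"
    and "S \<subseteq> T" "T \<subseteq> V"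
  shows "sigma_NIR V wp wn N0 S \<le> sigma_NIR V wp wn N0 T"
proof -
  let ?G = "\<lambda>S thn. \<Sum>v\<in>V. blocking_prob V wp wn N0 thn S v"
  have integral: "sigma_NIR V wp wn N0 A = (\<integral>thn. ?G A thn \<partial>threshold_space V)"
    "integrable (threshold_space V) (?G A)" if "A \<subseteq> V" for A
    by (rule sigma_NIR_as_integral; use assms that in auto)+
  have "S \<subseteq> V" using assms by auto
  have "(\<integral>thn. ?G S thn \<partial>threshold_space V) \<le> (\<integral>thn. ?G T thn \<partial>threshold_space V)"
  proof (rule Bochner_Integration.integral_mono)
    show "?G S thn \<le> ?G T thn" for thn
      by (rule sum_mono, rule blocking_prob_mono) (use assms in auto)
  qed (fact integral(2)[OF \<open>S \<subseteq> V\<close>], fact integral(2)[OF \<open>T \<subseteq> V\<close>])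
  then show ?thesis
    unfolding integral(1)[OF \<open>S \<subseteq> V\<close>] integral(1)[OF \<open>T \<subseteq> V\<close>] .
qed

lemma sigma_NIR_submodular:
  assumes "finite V" "N0 \<subseteq> V" "\<And>a b. wp a b \<ge> 0" "\<And>v. v \<in> V \<Longrightarrow> (\<Sum>u\<in>V. wp u v) \<le> 1"
    and "S \<subseteq> T" "T \<subseteq> V" "x \<in> V" "x \<notin> T"
  shows "sigma_NIR V wp wn N0 (insert x S) - sigma_NIR V wp wn N0 S
       \<ge> sigma_NIR V wp wn N0 (insert x T) - sigma_NIR V wp wn N0 T"
proof -
  let ?G = "\<lambda>S thn. \<Sum>v\<in>V. blocking_prob V wp wn N0 thn S v"
  have integral: "sigma_NIR V wp wn N0 A = (\<integral>thn. ?G A thn \<partial>threshold_space V)"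
    "integrable (threshold_space V) (?G A)" if "A \<subseteq> V" for A
    by (rule sigma_NIR_as_integral; use assms that in auto)+
  have subsets: "S \<subseteq> V" "insert x S \<subseteq> V" "insert x T \<subseteq> V"
    using assms by auto
  have "0 \<le> (\<integral>thn. (?G (insert x S) thn - ?G S thn) - (?G (insert x T) thn - ?G T thn) \<partial>threshold_space V)"
  proof (rule Bochner_Integration.integral_nonneg)
    fix thn
    have "(\<Sum>v\<in>V. blocking_prob V wp wn N0 thn (insert x T) v - blocking_prob V wp wn N0 thn T v)
       \<le> (\<Sum>v\<in>V. blocking_prob V wp wn N0 thn (insert x S) v - blocking_prob V wp wn N0 thn S v)"
      by (rule sum_mono, rule blocking_prob_submodular) (use assms in auto)
    then show "0 \<le> (?G (insert x S) thn - ?G S thn) - (?G (insert x T) thn - ?G T thn)"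
      by (simp add: sum_subtractf)
  qed
  also have "\<dots> = (sigma_NIR V wp wn N0 (insert x S) - sigma_NIR V wp wn N0 S)
      - (sigma_NIR V wp wn N0 (insert x T) - sigma_NIR V wp wn N0 T)"
    using subsets assms(6) by (simp add: integral Bochner_Integration.integral_diff)
  finally show ?thesis by simp
qed

lemma sigma_NIR_empty: "sigma_NIR V wp wn N0 {} = 0"
proof -
  have "IBS V wp wn N0 thp thn {} = {}" for thp thn
    unfolding IBS_def by auto
  then show ?thesis unfolding sigma_NIR_def by simp
qed

theorem theorem2:
  fixes V :: "'v set" and E :: "('v \<times> 'v) set"
    and wp wn :: "'v \<Rightarrow> 'v \<Rightarrow> real" and N0 :: "'v set"
  assumes finV: "finite V"
    and E_sub: "E \<subseteq> V \<times> V"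
    and wp_nonneg: "\<And>u v. wp u v \<ge> 0"
    and wn_nonneg: "\<And>u v. wn u v \<ge> 0"
    and wp_edges: "\<And>u v. (u, v) \<notin> E \<Longrightarrow> wp u v = 0"
    and wn_edges: "\<And>u v. (u, v) \<notin> E \<Longrightarrow> wn u v = 0"
    and wp_sum: "\<And>v. v \<in> V \<Longrightarrow> (\<Sum>u\<in>V. wp u v) \<le> 1"
    and wn_sum: "\<And>v. v \<in> V \<Longrightarrow> (\<Sum>u\<in>V. wn u v) \<le> 1"
    and N0_sub: "N0 \<subseteq> V"
  shows "(\<forall>S T. S \<subseteq> T \<and> T \<subseteq> V - N0 \<longrightarrow> sigma_NIR V wp wn N0 S \<le> sigma_NIR V wp wn N0 T)
       \<and> (\<forall>S T x. S \<subseteq> T \<and> T \<subseteq> V - N0 \<and> x \<in> V - N0 \<and> x \<notin> T \<longrightarrow>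
            sigma_NIR V wp wn N0 (insert x S) - sigma_NIR V wp wn N0 S
              \<ge> sigma_NIR V wp wn N0 (insert x T) - sigma_NIR V wp wn N0 T)
       \<and> sigma_NIR V wp wn N0 {} = 0"
proof (intro conjI allI impI)
  fix S T
  assume "S \<subseteq> T \<and> T \<subseteq> V - N0"
  then show "sigma_NIR V wp wn N0 S \<le> sigma_NIR V wp wn N0 T"
    by (intro sigma_NIR_mono[OF finV N0_sub]) (use wp_nonneg wp_sum in auto)
next
  fix S T x
  assume "S \<subseteq> T \<and> T \<subseteq> V - N0 \<and> x \<in> V - N0 \<and> x \<notin> T"
  then show "sigma_NIR V wp wn N0 (insert x S) - sigma_NIR V wp wn N0 S
      \<ge> sigma_NIR V wp wn N0 (insert x T) - sigma_NIR V wp wn N0 T"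
    by (intro sigma_NIR_submodular[OF finV N0_sub]) (use wp_nonneg wp_sum in auto)
qed (rule sigma_NIR_empty)

end
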